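(* Let $P$ be a treetope with base $B$. Then for every face $F$ of $P$ with $\dim F>1$, either $F\subseteq B$, or $F\cap B$ is a facet of $F$ and $F$ is a treetope with base $F\cap B$. In particular, $\dim(F\cap B)\ge \dim F-1$ for every face $F$ of $P$ with $\dim F>1$.
   Context: A polytope is the convex hull of a finite set of points in a Euclidean space; faces, vertices, edges, facets and the graph (1-skeleton) are as usual. A \emph{treetope} is a polytope $P$ together with a distinguished facet $B$ (the \emph{base}) such that every face $F$ of $P$ whose intersection $F\cap B$ consists of at most one point has dimension at most one. *)

theory Defs
  imports "HOL-Analysis.Analysis"
begin

definition treetope :: "'a::euclidean_space set \<Rightarrow> 'a set \<Rightarrow> bool" where
  "treetope P B \<longleftrightarrow> polytope P \<and> B facet_of P \<and>
     (\<forall>F. F face_of P \<and> (F \<inter> B = {} \<or> (\<exists>x. F \<inter> B = {x})) \<longrightarrow> aff_dim F \<le> 1)"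

end

theory Submission
  imports Defs
begin

text \<open>Let \<open>F\<close> be a face of dimension \<open>d > 1\<close> not contained in \<open>B\<close>, and suppose
  \<open>G = F \<inter> B\<close> had dimension at most \<open>d - 2\<close>. By the treetope condition \<open>G\<close> has at
  least two points, so some facet \<open>E\<close> of \<open>F\<close> does not contain \<open>G\<close>. Then \<open>E \<noteq> B\<close>
  by dimension, so by induction on \<open>d\<close> the face \<open>E \<inter> B\<close> of \<open>G\<close> has dimension
  \<open>d - 2 \<ge> dim G\<close>, forcing \<open>E \<inter> B = G\<close>, a contradiction. Being a treetope with base
  \<open>F \<inter> B\<close> is inherited because faces of \<open>F\<close> are faces of \<open>P\<close>.\<close>

lemma face_of_polyhedron_facet_avoiding:
  assumes "polyhedron S" "C face_of S" "C \<noteq> {}" "y \<in> S" "y \<notin> C"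
  obtains E where "E facet_of S" "C \<subseteq> E" "y \<notin> E"
proof -
  have "C = \<Inter>{E. E facet_of S \<and> C \<subseteq> E}"
    using face_of_polyhedron assms by blast
  then show thesis
    using that \<open>y \<notin> C\<close> by blast
qed

lemma face_of_polytope_not_subset_facet:
  assumes "polytope S" "T face_of S" "a \<in> T" "b \<in> T" "a \<noteq> b"
  obtains E where "E facet_of S" "\<not> T \<subseteq> E"
proof -
  have pT: "polytope T"
    using face_of_polytope_polytope assms(1,2) by blast
  obtain u where u: "u extreme_point_of T"
    using extreme_point_exists_convex[OF polytope_imp_compact[OF pT] polytope_imp_convex[OF pT]]
      assms(3) by blast
  then have "u \<in> T"
    by (simp add: extreme_point_of_def)
  then obtain y where "y \<in> T" "y \<noteq> u"
    using assms(3-5) by blast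
  moreover have "{u} face_of S"
    using face_of_trans[OF iffD2[OF face_of_singleton u] assms(2)] .
  moreover have "y \<in> S"
    using \<open>y \<in> T\<close> face_of_imp_subset[OF assms(2)] by blast
  ultimately obtain E where "E facet_of S" "y \<notin> E"
    using face_of_polyhedron_facet_avoiding[OF polytope_imp_polyhedron[OF assms(1)], of "{u}" y]
    by auto
  then show thesis
    using that \<open>y \<in> T\<close> by blast
qed

lemma face_of_Int_face_of:
  assumes "F face_of P" "B face_of P"
  shows "F \<inter> B face_of F"
  using face_of_face[OF assms(1)] face_of_Int[OF assms] by blast

lemma treetope_imp_polytope: "treetope P B \<Longrightarrow> polytope P"
  unfolding treetope_def by blast

lemma treetope_base_face_of: "treetope P B \<Longrightarrow> B face_of P"
  unfolding treetope_def facet_of_def by blast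

lemma treetope_face_Int_base_two_points:
  assumes "treetope P B" "F face_of P" "aff_dim F > 1"
  obtains a b where "a \<in> F \<inter> B" "b \<in> F \<inter> B" "a \<noteq> b"
proof -
  have "\<not> (F \<inter> B = {} \<or> (\<exists>x. F \<inter> B = {x}))"
    using assms unfolding treetope_def by auto
  then show thesis
    using that by blast
qed

lemma treetope_aff_dim_Int_base:
  assumes T: "treetope P B"
  shows "F face_of P \<Longrightarrow> aff_dim F > 1 \<Longrightarrow> \<not> F \<subseteq> B \<Longrightarrow> aff_dim (F \<inter> B) = aff_dim F - 1"
proof (induction "nat (aff_dim F)" arbitrary: F rule: less_induct)
  case less
  define G where "G = F \<inter> B"
  have BP: "B face_of P"
    using treetope_base_face_of[OF T] .
  have pF: "polytope F"
    using face_of_polytope_polytope[OF treetope_imp_polytope[OF T] less.prems(1)] .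
  have GF: "G face_of F"
    unfolding G_def using face_of_Int_face_of[OF less.prems(1) BP] .
  have "aff_dim G < aff_dim F"
    using face_of_aff_dim_lt[OF polytope_imp_convex[OF pF] GF] less.prems(3) G_def by blast
  moreover have "aff_dim G \<ge> aff_dim F - 1"
  proof (rule ccontr)
    assume "\<not> aff_dim G \<ge> aff_dim F - 1"
    then have small: "aff_dim G \<le> aff_dim F - 2" by simp
    obtain a b where ab: "a \<in> G" "b \<in> G" "a \<noteq> b"
      using treetope_face_Int_base_two_points[OF T less.prems(1,2)] unfolding G_def .
    then have "aff_dim G \<ge> 1"
      using aff_dim_subset[of "{a, b}" G] by simp
    obtain E where EF: "E facet_of F" and GE: "\<not> G \<subseteq> E"
      using face_of_polytope_not_subset_facet[OF pF GF ab] .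
    have EfF: "E face_of F" and dE: "aff_dim E = aff_dim F - 1"
      using EF by (auto simp: facet_of_def)
    have EP: "E face_of P"
      using face_of_trans[OF EfF less.prems(1)] .
    have "E \<subseteq> F"
      using face_of_imp_subset[OF EfF] .
    have EnB: "\<not> E \<subseteq> B"
    proof
      assume "E \<subseteq> B"
      then have "E \<subseteq> G"
        using \<open>E \<subseteq> F\<close> G_def by blast
      then have "aff_dim E \<le> aff_dim G"
        by (rule aff_dim_subset)
      then show False
        using dE small by simp
    qed
    have "aff_dim E > 1"
      using dE small \<open>aff_dim G \<ge> 1\<close> by simp
    then have IH: "aff_dim (E \<inter> B) = aff_dim E - 1"
      using less.hyps[OF _ EP _ EnB] dE by simp
    have "E \<inter> B face_of G"
    proof (rule face_of_subset[OF face_of_Int[OF EP BP]])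
      show "E \<inter> B \<subseteq> G"
        using \<open>E \<subseteq> F\<close> G_def by blast
      show "G \<subseteq> P"
        using face_of_imp_subset GF less.prems(1) by blast
    qed
    then have "E \<inter> B = G"
      using face_of_aff_dim_lt[OF polytope_imp_convex[OF face_of_polytope_polytope[OF pF GF]]]
        IH dE small by force
    then show False
      using GE by blast
  qed
  ultimately show ?case
    unfolding G_def by simp
qed

lemma treetope_face:
  assumes "treetope P B" "F face_of P" "(F \<inter> B) facet_of F"
  shows "treetope F (F \<inter> B)"
  unfolding treetope_def
proof (intro conjI allI impI)
  show "polytope F"
    using face_of_polytope_polytope[OF treetope_imp_polytope[OF assms(1)] assms(2)] .
  show "(F \<inter> B) facet_of F" by fact
next
  fix F' assume F': "F' face_of F \<and> (F' \<inter> (F \<inter> B) = {} \<or> (\<exists>x. F' \<inter> (F \<inter> B) = {x}))"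
  then have "F' face_of P" and "F' \<inter> (F \<inter> B) = F' \<inter> B"
    using face_of_trans[OF _ assms(2)] face_of_imp_subset by blast+
  then show "aff_dim F' \<le> 1"
    using assms(1) F' unfolding treetope_def by auto
qed

theorem mainTheorem3:
  fixes P B :: "'a::euclidean_space set"
  assumes "treetope P B"
  shows "\<forall>F. F face_of P \<and> aff_dim F > 1 \<longrightarrow>
           (F \<subseteq> B \<or> ((F \<inter> B) facet_of F \<and> treetope F (F \<inter> B)))
           \<and> aff_dim (F \<inter> B) \<ge> aff_dim F - 1"
proof (intro allI impI)
  fix F assume F: "F face_of P \<and> aff_dim F > 1"
  show "(F \<subseteq> B \<or> ((F \<inter> B) facet_of F \<and> treetope F (F \<inter> B)))
           \<and> aff_dim (F \<inter> B) \<ge> aff_dim F - 1"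
  proof (cases "F \<subseteq> B")
    case True
    then show ?thesis
      by (simp add: Int_absorb2)
  next
    case False
    have dim: "aff_dim (F \<inter> B) = aff_dim F - 1"
      using treetope_aff_dim_Int_base[OF assms] F False by blast
    then have "(F \<inter> B) facet_of F"
      using face_of_Int_face_of[OF _ treetope_base_face_of[OF assms]] F
      by (fastforce simp: facet_of_def)
    then show ?thesis
      using treetope_face[OF assms] F dim by simp
  qed
qed

end
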